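(* Let $B_1,\dots,B_n$ be $n\times n$ complex Hadamard matrices (normalized so that all entries have absolute value $1/\sqrt n$), and let $B=[B_1\,|\,B_2\,|\cdots|\,B_n]$ be the $n\times n^2$ matrix whose columns are all columns of all $B_i$. Let $w_1,\dots,w_n\in\mathbb{C}^{n^2}$ be the rows of $B$. Then $\{B_1,\dots,B_n\}$ is a complete system of mutually unbiased Hadamards if and only if the vectors $w_i\circ w_j$, $1\le i\le j\le n$, are pairwise orthogonal (i.e. $\langle w_i\circ w_j| w_k\circ w_l\rangle=0$ whenever $\{i,j\}\neq\{k,l\}$ as multisets).
   Context: A complex Hadamard matrix is an $n\times n$ unitary matrix all of whose entries have the same absolute value $1/\sqrt{n}$. Two such matrices are mutually unbiased if $|\langle x|y\rangle|=1/\sqrt n$ for every column $x$ of one and every column $y$ of the other. A complete system of mutually unbiased Hadamards (MUHs) in $\mathbb{C}^n$ is a set of $n$ complex Hadamard matrices that are pairwise mutually unbiased (equivalently, together with the identity matrix their column sets form $n+1$ mutually unbiased bases). $\circ$ is the entrywise (Schur) product; $\langle x|y\rangle=\sum_t\overline{x_t}y_t$. *)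

theory Defs
  imports Complex_Main
begin

text \<open>Vectors in C^m are functions nat => complex, used on indices < m;
 n x n matrices are functions nat => nat => complex (row, column), used on indices < n.\<close>

definition cinner :: "nat \<Rightarrow> (nat \<Rightarrow> complex) \<Rightarrow> (nat \<Rightarrow> complex) \<Rightarrow> complex" where
  "cinner m x y = (\<Sum>t<m. cnj (x t) * y t)"

definition schur :: "(nat \<Rightarrow> complex) \<Rightarrow> (nat \<Rightarrow> complex) \<Rightarrow> (nat \<Rightarrow> complex)" where
  "schur x y = (\<lambda>t. x t * y t)"

definition col :: "(nat \<Rightarrow> nat \<Rightarrow> complex) \<Rightarrow> nat \<Rightarrow> (nat \<Rightarrow> complex)" where
  "col U j = (\<lambda>r. U r j)"

definition unitary_mat :: "nat \<Rightarrow> (nat \<Rightarrow> nat \<Rightarrow> complex) \<Rightarrow> bool" where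
  "unitary_mat n U \<longleftrightarrow>
     (\<forall>j<n. \<forall>k<n. (\<Sum>t<n. cnj (U t j) * U t k) = (if j = k then 1 else 0))"

definition complex_hadamard :: "nat \<Rightarrow> (nat \<Rightarrow> nat \<Rightarrow> complex) \<Rightarrow> bool" where
  "complex_hadamard n U \<longleftrightarrow> unitary_mat n U \<and>
     (\<forall>i<n. \<forall>j<n. cmod (U i j) = 1 / sqrt (real n))"

definition mutually_unbiased :: "nat \<Rightarrow> (nat \<Rightarrow> nat \<Rightarrow> complex) \<Rightarrow> (nat \<Rightarrow> nat \<Rightarrow> complex) \<Rightarrow> bool" where
  "mutually_unbiased n U V \<longleftrightarrow>
     (\<forall>j<n. \<forall>k<n. cmod (cinner n (col U j) (col V k)) = 1 / sqrt (real n))"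

definition complete_MUH :: "nat \<Rightarrow> (nat \<Rightarrow> nat \<Rightarrow> nat \<Rightarrow> complex) \<Rightarrow> bool" where
  "complete_MUH n B \<longleftrightarrow> (\<forall>a<n. complex_hadamard n (B a)) \<and>
     (\<forall>a<n. \<forall>b<n. a \<noteq> b \<longrightarrow> mutually_unbiased n (B a) (B b))"

text \<open>Row i of the n x n^2 block matrix [B_0 | ... | B_{n-1}]: entry at column a*n + c is (B_a)_{i,c}.\<close>
definition block_row :: "nat \<Rightarrow> (nat \<Rightarrow> nat \<Rightarrow> nat \<Rightarrow> complex) \<Rightarrow> nat \<Rightarrow> (nat \<Rightarrow> complex)" where
  "block_row n B i = (\<lambda>m. B (m div n) i (m mod n))"

end

theory Submission
  imports Defs
begin

(*
  Write X_u (u = (a, c), a, c < n) for the n^2 columns of the block matrix [B_0 | ... | B_{n-1}]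
  and T_u = X_u (x) X_u for their tensor squares, indexed by pairs r = (i, j).  The inner
  product of two Schur products of rows is a Gram entry of the T's taken row-wise:
     <w_i o w_j | w_k o w_l> = sum_u cnj (T_u (i,j)) * T_u (k,l) =: R((i,j),(k,l)),
  while the column-wise Gram entries are <T_u | T_v> = <X_u | X_v>^2.  A Frobenius-norm
  identity (|M^* M|_F = |M M^*|_F) therefore gives
     sum_{u,v} |<X_u|X_v>|^4 = sum_{r,s} |R(r,s)|^2.
  On both sides the "trivial" entries are fixed by the Hadamard property alone: <X_u|X_v> is a
  Kronecker delta inside a block, and R(r,s) = 1 when s = r or s = swap r.  Hence
     n^2 + (cross-block 4th moment) = 2n^2 - n + (off-diagonal mass of R).
  The cross-block 4th moment equals n^2 - n exactly when all cross-block overlaps have modulus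
  1/sqrt n: "if" is a direct count, "only if" is a variance argument using the lower bound
  n^3 - n^2 for the cross-block 2nd moment (again from the Frobenius identity).  So the system
  is a complete MUH iff R vanishes off the trivial entries, i.e. iff the w_i o w_j are orthogonal.
*)

(* Frobenius identity for the two Gram matrices of a family of vectors N u (u in A), indexed by P:
   the squared entries of the column Gram matrix and of the row Gram matrix have equal sums
   (both are the same quadruple sum). *)
lemma gram_frobenius:
  fixes N :: "'a \<Rightarrow> 'b \<Rightarrow> complex"
  assumes "finite A" "finite P"
  shows "(\<Sum>u\<in>A. \<Sum>v\<in>A. (cmod (\<Sum>r\<in>P. cnj (N v r) * N u r))^2)
       = (\<Sum>r\<in>P. \<Sum>s\<in>P. (cmod (\<Sum>u\<in>A. cnj (N u r) * N u s))^2)"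
proof -
  have norm_sq: "\<And>z. (complex_of_real (cmod z))^2 = z * cnj z"
    using complex_norm_square by simp
  have "complex_of_real (\<Sum>u\<in>A. \<Sum>v\<in>A. (cmod (\<Sum>r\<in>P. cnj (N v r) * N u r))^2)
      = (\<Sum>u\<in>A. \<Sum>v\<in>A. \<Sum>r\<in>P. \<Sum>s\<in>P. cnj (N u r) * N v r * (N u s * cnj (N v s)))"
    unfolding of_real_sum of_real_power norm_sq
    by (simp add: sum_distrib_left sum_distrib_right mult_ac)
  also have "\<dots> = (\<Sum>r\<in>P. \<Sum>s\<in>P. \<Sum>u\<in>A. \<Sum>v\<in>A. cnj (N u r) * N v r * (N u s * cnj (N v s)))"
    by (subst sum.swap, subst (2) sum.swap, subst (3) sum.swap, subst (2) sum.swap) (rule refl)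
  also have "\<dots> = complex_of_real (\<Sum>r\<in>P. \<Sum>s\<in>P. (cmod (\<Sum>u\<in>A. cnj (N u r) * N u s))^2)"
    unfolding of_real_sum of_real_power norm_sq
    by (simp add: sum_distrib_left sum_distrib_right mult_ac)
  finally show ?thesis by (simp only: of_real_eq_iff)
qed

lemma double_sum_nonneg_eq_0:
  fixes f :: "'a \<Rightarrow> 'a \<Rightarrow> real"
  assumes "finite A" and nonneg: "\<And>x y. x \<in> A \<Longrightarrow> y \<in> A \<Longrightarrow> f x y \<ge> 0"
    and "(\<Sum>x\<in>A. \<Sum>y\<in>A. f x y) \<le> 0" and "x \<in> A" "y \<in> A"
  shows "f x y = 0"
proof -
  have "(\<Sum>(x, y)\<in>A \<times> A. f x y) \<le> 0"
    using assms(3) by (simp add: sum.cartesian_product)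
  moreover have "(\<Sum>(x, y)\<in>A \<times> A. f x y) \<ge> 0"
    using nonneg by (intro sum_nonneg) auto
  ultimately have "(\<Sum>(x, y)\<in>A \<times> A. f x y) = 0" by linarith
  then show ?thesis
    using sum_nonneg_eq_0_iff[of "A \<times> A" "\<lambda>(x, y). f x y"] assms by auto
qed

lemma bij_betw_div_mod:
  assumes "0 < (n::nat)"
  shows "bij_betw (\<lambda>p. (p div n, p mod n)) {..<n^2} ({..<n} \<times> {..<n})"
proof (rule bij_betw_byWitness[where f' = "\<lambda>(a, c). a * n + c"])
  show "(\<lambda>(a, c). a * n + c) ` ({..<n} \<times> {..<n}) \<subseteq> {..<n^2}"
  proof clarify
    fix a c assume "a < n" "c < n"
    have "a * n + c < (a + 1) * n" using \<open>c < n\<close> by simp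
    also have "\<dots> \<le> n * n" using \<open>a < n\<close> by (intro mult_right_mono) auto
    finally show "a * n + c < n^2" by (simp add: power2_eq_square)
  qed
qed (use assms in \<open>auto simp: power2_eq_square less_mult_imp_div_less\<close>)

(* Two index pairs describe the same unordered pair {i, j}; these are the entries where the
   Gram matrix of the Schur products w_i o w_j is forced to be 1. *)
definition same_pair :: "nat \<times> nat \<Rightarrow> nat \<times> nat \<Rightarrow> bool" where
  "same_pair r s \<longleftrightarrow> s = r \<or> s = prod.swap r"

lemma count_other_first:
  assumes "a < n"
  shows "(\<Sum>v\<in>{..<n} \<times> {..<n}. if a = fst v then 0 else 1 :: real) = real n * real n - real n"
proof -
  have "(\<Sum>v\<in>{..<n} \<times> {..<n}. if a = fst v then 0 else 1 :: real)
      = (\<Sum>b<n. \<Sum>d<n. if a = b then 0 else 1 :: real)"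
    by (simp add: sum.cartesian_product')
  also have "\<dots> = (\<Sum>b<n. real n - (if a = b then real n else 0))"
    by (intro sum.cong) auto
  also have "\<dots> = real n * real n - real n" using assms by (simp add: sum_subtractf)
  finally show ?thesis .
qed

(* Number of pairs (r, s) in ([n] x [n])^2 with s = r or s = swap r: 2 for each of the n^2 - n
   off-diagonal r, 1 for each of the n diagonal ones. *)
lemma count_same_pairs:
  "(\<Sum>r\<in>{..<n} \<times> {..<n}. \<Sum>s\<in>{..<n} \<times> {..<n}. of_bool (same_pair r s) :: real)
     = 2 * real n * real n - real n"
proof -
  have "(\<Sum>s\<in>{..<n} \<times> {..<n}. of_bool (same_pair r s) :: real) = 2 - of_bool (fst r = snd r)"
    if "r \<in> {..<n} \<times> {..<n}" for r
  proof -
    have "{..<n} \<times> {..<n} \<inter> {s. same_pair r s} = {r, prod.swap r}"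
      using that by (auto simp: same_pair_def)
    then show ?thesis by (cases r) auto
  qed
  then have "(\<Sum>r\<in>{..<n} \<times> {..<n}. \<Sum>s\<in>{..<n} \<times> {..<n}. of_bool (same_pair r s) :: real)
      = (\<Sum>i<n. \<Sum>j<n. 2 - of_bool (i = j))"
    by (simp add: sum.cartesian_product')
  also have "\<dots> = 2 * real n * real n - real n" by (simp add: sum_subtractf algebra_simps)
  finally show ?thesis .
qed

locale hadamard_family =
  fixes n :: nat and B :: "nat \<Rightarrow> nat \<Rightarrow> nat \<Rightarrow> complex"
  assumes n_pos: "0 < n"
    and hadamard: "\<forall>a<n. complex_hadamard n (B a)"
begin

abbreviation idx :: "(nat \<times> nat) set" where
  "idx \<equiv> {..<n} \<times> {..<n}"

definition bcol :: "nat \<times> nat \<Rightarrow> nat \<Rightarrow> complex" where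
  "bcol u = col (B (fst u)) (snd u)"

lemma bcol_apply: "bcol u t = B (fst u) t (snd u)"
  by (simp add: bcol_def col_def)

definition colgram :: "nat \<times> nat \<Rightarrow> nat \<times> nat \<Rightarrow> complex" where
  "colgram u v = cinner n (bcol u) (bcol v)"

definition tensor_sq :: "nat \<times> nat \<Rightarrow> nat \<times> nat \<Rightarrow> complex" where
  "tensor_sq u r = bcol u (fst r) * bcol u (snd r)"

definition rowgram :: "nat \<times> nat \<Rightarrow> nat \<times> nat \<Rightarrow> complex" where
  "rowgram r s = cinner (n^2) (schur (block_row n B (fst r)) (block_row n B (snd r)))
                              (schur (block_row n B (fst s)) (block_row n B (snd s)))"

lemma entry_norm_sq:
  assumes "u \<in> idx" "t < n"
  shows "cnj (bcol u t) * bcol u t = 1 / of_nat n"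
proof -
  have "cmod (bcol u t) = 1 / sqrt (real n)"
    using hadamard assms unfolding complex_hadamard_def bcol_apply by auto
  then have "complex_of_real ((cmod (bcol u t))^2) = 1 / of_nat n"
    using n_pos by (simp add: power_divide)
  then show ?thesis by (simp add: complex_norm_square[symmetric] mult.commute)
qed

lemma colgram_same_block:
  assumes "u \<in> idx" "v \<in> idx" "fst u = fst v"
  shows "colgram u v = of_bool (u = v)"
proof -
  have "unitary_mat n (B (fst u))"
    using hadamard assms unfolding complex_hadamard_def bcol_apply by auto
  then show ?thesis
    using assms unfolding unitary_mat_def colgram_def cinner_def bcol_apply
    by (cases u, cases v) auto
qed

lemma rowgram_eq_sum:
  "rowgram r s = (\<Sum>u\<in>idx. cnj (tensor_sq u r) * tensor_sq u s)"
proof -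
  have "rowgram r s = (\<Sum>p<n^2. (\<lambda>u. cnj (tensor_sq u r) * tensor_sq u s) (p div n, p mod n))"
    unfolding rowgram_def cinner_def schur_def block_row_def tensor_sq_def bcol_apply by simp
  also have "\<dots> = (\<Sum>u\<in>idx. cnj (tensor_sq u r) * tensor_sq u s)"
    by (rule sum.reindex_bij_betw[OF bij_betw_div_mod[OF n_pos]])
  finally show ?thesis .
qed

(* The trivial entries of the row Gram matrix are 1, by flatness of the entries alone. *)
lemma rowgram_same_pair:
  assumes "r \<in> idx" "same_pair r s"
  shows "rowgram r s = 1"
proof -
  have "rowgram r s = (\<Sum>u\<in>idx. (cnj (bcol u (fst r)) * bcol u (fst r))
                               * (cnj (bcol u (snd r)) * bcol u (snd r)))"
    using assms(2) unfolding rowgram_eq_sum tensor_sq_def same_pair_def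
    by (auto simp: mult_ac)
  also have "\<dots> = (\<Sum>u\<in>idx. 1 / of_nat n * (1 / of_nat n))"
    using assms(1) by (intro sum.cong refl) (auto simp: entry_norm_sq)
  also have "\<dots> = 1" using n_pos by (simp add: field_simps)
  finally show ?thesis .
qed

lemma tensor_sq_inner:
  "(\<Sum>r\<in>idx. cnj (tensor_sq u r) * tensor_sq v r) = (colgram u v)^2"
proof -
  have "(\<Sum>r\<in>idx. cnj (tensor_sq u r) * tensor_sq v r)
      = (\<Sum>i<n. \<Sum>j<n. (cnj (bcol u i) * bcol v i) * (cnj (bcol u j) * bcol v j))"
    unfolding tensor_sq_def by (simp add: sum.cartesian_product' mult_ac)
  also have "\<dots> = (colgram u v)^2"
    unfolding colgram_def cinner_def power2_eq_square sum_product ..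
  finally show ?thesis .
qed

definition cross_moment :: "nat \<Rightarrow> real" where
  "cross_moment m = (\<Sum>u\<in>idx. \<Sum>v\<in>idx. if fst u = fst v then 0 else (cmod (colgram u v))^m)"

definition off_rowgram :: real where
  "off_rowgram = (\<Sum>r\<in>idx. \<Sum>s\<in>idx. if same_pair r s then 0 else (cmod (rowgram r s))^2)"

(* Inside a block the overlaps form an identity matrix, contributing n^2 to every moment. *)
lemma moment_split:
  assumes "0 < m"
  shows "(\<Sum>u\<in>idx. \<Sum>v\<in>idx. (cmod (colgram u v))^m) = real n * real n + cross_moment m"
proof -
  have "(\<Sum>u\<in>idx. \<Sum>v\<in>idx. (cmod (colgram u v))^m)
      = (\<Sum>u\<in>idx. \<Sum>v\<in>idx. of_bool (u = v)
           + (if fst u = fst v then 0 else (cmod (colgram u v))^m))"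
    using assms by (intro sum.cong refl) (auto simp: colgram_same_block)
  then show ?thesis by (simp add: sum.distrib cross_moment_def)
qed

(* The Frobenius identity applied to the tensor squares: the key balance equation linking the
   cross-block 4th moment with the off-diagonal mass of the row Gram matrix. *)
lemma fourth_moment_balance:
  "real n * real n + cross_moment 4 = 2 * real n * real n - real n + off_rowgram"
proof -
  have "real n * real n + cross_moment 4 = (\<Sum>u\<in>idx. \<Sum>v\<in>idx. (cmod (colgram u v))^4)"
    by (simp add: moment_split)
  also have "\<dots> = (\<Sum>v\<in>idx. \<Sum>u\<in>idx. (cmod (colgram u v))^4)"
    by (rule sum.swap)
  also have "\<dots> = (\<Sum>v\<in>idx. \<Sum>u\<in>idx. (cmod (\<Sum>r\<in>idx. cnj (tensor_sq u r) * tensor_sq v r))^2)"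
    by (simp add: tensor_sq_inner norm_power power_mult[symmetric])
  also have "\<dots> = (\<Sum>r\<in>idx. \<Sum>s\<in>idx. (cmod (rowgram r s))^2)"
    unfolding rowgram_eq_sum by (rule gram_frobenius) auto
  also have "\<dots> = (\<Sum>r\<in>idx. \<Sum>s\<in>idx. of_bool (same_pair r s)
                     + (if same_pair r s then 0 else (cmod (rowgram r s))^2))"
    by (intro sum.cong refl) (auto simp: rowgram_same_pair)
  also have "\<dots> = 2 * real n * real n - real n + off_rowgram"
    by (simp only: sum.distrib count_same_pairs off_rowgram_def)
  finally show ?thesis .
qed

(* The Frobenius identity applied to the columns themselves, keeping only the diagonal of the
   n x n side (each row of the block matrix has squared norm n), bounds the 2nd moment below. *)
lemma second_moment_bound:
  "real n * real n * real n - real n * real n \<le> cross_moment 2"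
proof -
  have column_sum: "(\<Sum>u\<in>idx. cnj (bcol u t) * bcol u t) = of_nat n" if "t < n" for t
    using that n_pos by (simp add: entry_norm_sq)
  have "real n * real n * real n = (\<Sum>t<n. (cmod (\<Sum>u\<in>idx. cnj (bcol u t) * bcol u t))^2)"
    by (simp add: column_sum power2_eq_square)
  also have "\<dots> \<le> (\<Sum>t<n. \<Sum>t'<n. (cmod (\<Sum>u\<in>idx. cnj (bcol u t) * bcol u t'))^2)"
    by (intro sum_mono member_le_sum) auto
  also have "\<dots> = (\<Sum>u\<in>idx. \<Sum>v\<in>idx. (cmod (colgram v u))^2)"
    unfolding colgram_def cinner_def by (rule gram_frobenius[of idx "{..<n}" bcol, symmetric]) auto
  also have "\<dots> = (\<Sum>v\<in>idx. \<Sum>u\<in>idx. (cmod (colgram v u))^2)"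
    by (rule sum.swap)
  also have "\<dots> = real n * real n + cross_moment 2"
    by (simp add: moment_split)
  finally show ?thesis by simp
qed

lemma complete_MUH_iff_cross_unbiased:
  "complete_MUH n B \<longleftrightarrow>
     (\<forall>u\<in>idx. \<forall>v\<in>idx. fst u \<noteq> fst v \<longrightarrow> cmod (colgram u v) = 1 / sqrt (real n))"
proof -
  have "cinner n (col (B a) j) (col (B b) k) = colgram (a, j) (b, k)" for a b j k
    by (simp add: colgram_def bcol_def)
  then show ?thesis
    using hadamard by (auto simp: complete_MUH_def mutually_unbiased_def)
qed

lemma count_cross_pairs:
  "(\<Sum>u\<in>idx. \<Sum>v\<in>idx. if fst u = fst v then 0 else 1 :: real)
     = real n * real n * (real n * real n - real n)"
proof -
  have "(\<Sum>v\<in>idx. if fst u = fst v then 0 else 1 :: real) = real n * real n - real n"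
    if "u \<in> idx" for u
    using that count_other_first[of "fst u" n] by auto
  then show ?thesis by simp
qed

(* If all cross-block overlaps have modulus 1/sqrt n, the 4th moment is their count / n^2. *)
lemma cross_moment_of_unbiased:
  assumes "\<forall>u\<in>idx. \<forall>v\<in>idx. fst u \<noteq> fst v \<longrightarrow> cmod (colgram u v) = 1 / sqrt (real n)"
  shows "cross_moment 4 = real n * real n - real n"
proof -
  have "sqrt (real n) ^ 4 = real n * real n" by (simp add: power4_eq_xxxx)
  then have "cross_moment 4
      = (\<Sum>u\<in>idx. \<Sum>v\<in>idx. (if fst u = fst v then 0 else 1) / (real n * real n))"
    unfolding cross_moment_def using assms by (intro sum.cong refl) (auto simp: power_divide)
  also have "\<dots> = real n * real n - real n"
    unfolding sum_divide_distrib[symmetric] count_cross_pairs using n_pos by simp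
  finally show ?thesis .
qed

(* Conversely, the variance of the squared cross-block overlaps around 1/n is
   cross_moment 4 - (2/n) cross_moment 2 + count/n^2, which the 2nd-moment bound makes
   nonpositive; hence every squared overlap equals 1/n. *)
lemma unbiased_of_cross_moment:
  assumes C4: "cross_moment 4 = real n * real n - real n"
  shows "\<forall>u\<in>idx. \<forall>v\<in>idx. fst u \<noteq> fst v \<longrightarrow> cmod (colgram u v) = 1 / sqrt (real n)"
proof (intro ballI impI)
  define dev where
    "dev u v = (if fst u = fst v then 0 else ((cmod (colgram u v))^2 - 1 / real n)^2)" for u v
  have "(\<Sum>u\<in>idx. \<Sum>v\<in>idx. dev u v)
      = cross_moment 4 - 2 / real n * cross_moment 2
        + (\<Sum>u\<in>idx. \<Sum>v\<in>idx. if fst u = fst v then 0 else 1) / (real n * real n)"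
  proof -
    have "(\<Sum>u\<in>idx. \<Sum>v\<in>idx. dev u v) = (\<Sum>u\<in>idx. \<Sum>v\<in>idx.
        (if fst u = fst v then 0 else (cmod (colgram u v))^4)
        - 2 / real n * (if fst u = fst v then 0 else (cmod (colgram u v))^2)
        + (if fst u = fst v then 0 else 1) / (real n * real n))"
      unfolding dev_def using n_pos
      by (intro sum.cong refl) (auto simp: power2_eq_square power4_eq_xxxx field_simps)
    then show ?thesis unfolding cross_moment_def
      by (simp add: sum.distrib sum_subtractf sum_distrib_left sum_divide_distrib)
  qed
  also have "\<dots> \<le> 0"
  proof -
    have "2 / real n * (real n * real n * real n - real n * real n) \<le> 2 / real n * cross_moment 2"
      using second_moment_bound by (intro mult_left_mono) auto
    moreover have "2 / real n * (real n * real n * real n - real n * real n) = 2 * (real n * real n - real n)"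
      using n_pos by (simp add: field_simps)
    ultimately show ?thesis unfolding count_cross_pairs C4 using n_pos by simp
  qed
  finally have dev_sum: "(\<Sum>u\<in>idx. \<Sum>v\<in>idx. dev u v) \<le> 0" .
  fix u v assume uv: "u \<in> idx" "v \<in> idx" "fst u \<noteq> fst v"
  have "dev u v = 0"
    by (rule double_sum_nonneg_eq_0[OF _ _ dev_sum uv(1,2)]) (auto simp: dev_def)
  then have "(cmod (colgram u v))^2 = 1 / real n" using uv by (simp add: dev_def)
  then show "cmod (colgram u v) = 1 / sqrt (real n)"
    by (metis norm_ge_zero real_sqrt_divide real_sqrt_one real_sqrt_unique)
qed

lemma off_rowgram_eq_0_iff:
  "off_rowgram = 0 \<longleftrightarrow> (\<forall>r\<in>idx. \<forall>s\<in>idx. \<not> same_pair r s \<longrightarrow> rowgram r s = 0)"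
proof
  assume "off_rowgram = 0"
  then have "(if same_pair r s then 0 else (cmod (rowgram r s))^2) = 0"
    if "r \<in> idx" "s \<in> idx" for r s
    by (intro double_sum_nonneg_eq_0[OF _ _ _ that]) (auto simp: off_rowgram_def)
  then show "\<forall>r\<in>idx. \<forall>s\<in>idx. \<not> same_pair r s \<longrightarrow> rowgram r s = 0" by fastforce
qed (auto simp: off_rowgram_def intro!: sum.neutral)

(* Schur products commute, so each index pair may be taken in either order; in particular
   it may be sorted. *)
lemma rowgram_swap:
  "rowgram (prod.swap r) s = rowgram r s" "rowgram r (prod.swap s) = rowgram r s"
  unfolding rowgram_eq_sum tensor_sq_def by (simp_all add: mult_ac)

lemma rowgram_sorted:
  "rowgram (min i j, max i j) (min k l, max k l) = rowgram (i, j) (k, l)"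
  using rowgram_swap[of "(i, j)"] rowgram_swap[of _ "(k, l)"]
  by (cases "i \<le> j"; cases "k \<le> l") (auto simp: min_def max_def)

lemma orthogonal_iff_rowgram:
  "(\<forall>i j k l. i \<le> j \<and> j < n \<and> k \<le> l \<and> l < n \<and> (i, j) \<noteq> (k, l) \<longrightarrow>
       cinner (n^2) (schur (block_row n B i) (block_row n B j))
                    (schur (block_row n B k) (block_row n B l)) = 0)
   \<longleftrightarrow> (\<forall>r\<in>idx. \<forall>s\<in>idx. \<not> same_pair r s \<longrightarrow> rowgram r s = 0)"
  (is "?sorted \<longleftrightarrow> ?all")
proof
  assume ?sorted
  then have "rowgram (min i j, max i j) (min k l, max k l) = 0"
    if "(i, j) \<in> idx" "(k, l) \<in> idx" "\<not> same_pair (i, j) (k, l)" for i j k l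
    using that by (auto simp: rowgram_def same_pair_def min_def max_def split: if_splits)
  then show ?all by (auto simp: rowgram_sorted)
next
  assume ?all
  moreover have "\<not> same_pair (i, j) (k, l)" if "i \<le> j" "k \<le> l" "(i, j) \<noteq> (k, l)" for i j k l
    using that by (auto simp: same_pair_def)
  ultimately show ?sorted by (auto simp: rowgram_def)
qed

theorem complete_MUH_iff_orthogonal:
  "complete_MUH n B \<longleftrightarrow>
    (\<forall>i j k l. i \<le> j \<and> j < n \<and> k \<le> l \<and> l < n \<and> (i, j) \<noteq> (k, l) \<longrightarrow>
       cinner (n^2) (schur (block_row n B i) (block_row n B j))
                    (schur (block_row n B k) (block_row n B l)) = 0)"
proof -
  have "complete_MUH n B \<longleftrightarrow> cross_moment 4 = real n * real n - real n"
    using complete_MUH_iff_cross_unbiased cross_moment_of_unbiased unbiased_of_cross_moment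
    by blast
  also have "\<dots> \<longleftrightarrow> off_rowgram = 0"
    using fourth_moment_balance by linarith
  finally show ?thesis
    unfolding orthogonal_iff_rowgram off_rowgram_eq_0_iff .
qed

end

(* For n = 0 both sides hold vacuously. *)
theorem theorem6:
  fixes n :: nat and B :: "nat \<Rightarrow> nat \<Rightarrow> nat \<Rightarrow> complex"
  assumes "\<forall>a<n. complex_hadamard n (B a)"
  shows "complete_MUH n B \<longleftrightarrow>
    (\<forall>i j k l. i \<le> j \<and> j < n \<and> k \<le> l \<and> l < n \<and> (i, j) \<noteq> (k, l) \<longrightarrow>
       cinner (n^2) (schur (block_row n B i) (block_row n B j))
                    (schur (block_row n B k) (block_row n B l)) = 0)"
proof (cases "n = 0")
  case True
  then show ?thesis by (simp add: complete_MUH_def)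
next
  case False
  then interpret hadamard_family n B
    using assms by unfold_locales simp_all
  show ?thesis by (rule complete_MUH_iff_orthogonal)
qed

end
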